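(* Let $s\ge 1$ be a fixed integer. Consider a sequence of $(s+1)$-tuples of integers $2\le n_0\le n_1\le\dots\le n_s$ (indexed so that $n_s\to\infty$) such that $n_0=(\log n_s)^{\alpha}$ with $\alpha\ge 2\sqrt{\frac{\log n_s}{\log\log n_s}}$. For every $0\le i\le s-1$ let $k_i=\frac{\log n_s}{\log n_i}$, and let $x_0$ be the unique root of the equation $sx-1-\sum_{j=0}^{s-1}x^{\frac{k_j-1}{k_j}}=0$ in the interval $[1,\infty)$. Then $$ch(K_{n_0,\dots,n_s})\ge(1-o(1))\frac{\log n_s}{\log x_0}$$ as $n_s\to\infty$.
   Context: All logarithms are to base 2. For a graph $G=(V,E)$, the choice number $ch(G)$ is the minimum integer $k$ such that for every assignment of a list $S(v)$ of at least $k$ colors to each vertex $v\in V$, there is a proper vertex coloring of $G$ assigning to each vertex $v$ a color from $S(v)$. $K_{n_0,\dots,n_s}$ denotes the complete $(s+1)$-partite graph with parts of sizes $n_0,\dots,n_s$. *)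

theory Defs
  imports Complex_Main
begin

text \<open>A list assignment gives each vertex a finite set of colours (colours are
  natural numbers, which is no restriction for finite graphs).\<close>

definition choosable :: "'v set \<Rightarrow> ('v \<Rightarrow> 'v \<Rightarrow> bool) \<Rightarrow> nat \<Rightarrow> bool" where
  "choosable V E k \<longleftrightarrow>
     (\<forall>L :: 'v \<Rightarrow> nat set. (\<forall>v\<in>V. finite (L v) \<and> k \<le> card (L v)) \<longrightarrow>
        (\<exists>c. (\<forall>v\<in>V. c v \<in> L v) \<and> (\<forall>u\<in>V. \<forall>v\<in>V. E u v \<longrightarrow> c u \<noteq> c v)))"

definition choice_number :: "'v set \<Rightarrow> ('v \<Rightarrow> 'v \<Rightarrow> bool) \<Rightarrow> nat" where
  "choice_number V E = (LEAST k. choosable V E k)"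

text \<open>Complete (s+1)-partite graph K_{n_0,...,n_s}: vertex (i,j) is the j-th
  vertex of part i; two vertices are adjacent iff they lie in different parts.\<close>

definition cmp_vertices :: "nat \<Rightarrow> (nat \<Rightarrow> nat) \<Rightarrow> (nat \<times> nat) set" where
  "cmp_vertices s n = {(i, j). i \<le> s \<and> j < n i}"

definition cmp_adj :: "nat \<times> nat \<Rightarrow> nat \<times> nat \<Rightarrow> bool" where
  "cmp_adj u v \<longleftrightarrow> fst u \<noteq> fst v"

definition ch_complete_multipartite :: "nat \<Rightarrow> (nat \<Rightarrow> nat) \<Rightarrow> nat" where
  "ch_complete_multipartite s n = choice_number (cmp_vertices s n) cmp_adj"

end

theory Submission
  imports Defs "HOL-Library.FuncSet"
begin

text \<open>
  Give every vertex a list chosen from the K-element subsets of the palette {0..<N}. A proper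
  colouring from the lists yields a map P from the palette to the parts {0..s} (a colour used
  on part i goes to i) such that every list of part i meets the class P^-1(i). If this class has
  c_i colours, a list misses it for a fraction q_i = C(N - c_i, K) / C(N, K) of the choices, so
  the lists of part i all meet it for at most a fraction exp(-n_i q_i) of the assignments.
  Hence, if every P has a class with n_i q_i > s N, the (s+1)^N maps P cannot account for all
  assignments, and ch > K.
  Otherwise ((N - c_i - K) / N)^K <= q_i <= s N / n_i for all i. Summing K-th roots, the left
  sides add up to s - (s+1) K / N because the c_i sum to N, whereas for
  K <= (1 - eps) log n_s / log x_0 the equation defining x_0 bounds the right sides by
  (s N)^(1/K) (s - g) for some g > 0. With N = (log n_s)^2 this is contradictory once n_s is
  large; the lower bound on n_0 keeps x_0 log x_0 = O(sqrt (log n_s)), which is what makes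
  such K and N possible.
\<close>

section \<open>Choice numbers\<close>

lemma choosable_mono:
  assumes "choosable V E k" "k \<le> k'"
  shows "choosable V E k'"
  unfolding choosable_def
proof (intro allI impI)
  fix L :: "'a \<Rightarrow> nat set"
  assume "\<forall>v\<in>V. finite (L v) \<and> k' \<le> card (L v)"
  then have "\<forall>v\<in>V. finite (L v) \<and> k \<le> card (L v)"
    using assms(2) by auto
  then show "\<exists>c. (\<forall>v\<in>V. c v \<in> L v) \<and> (\<forall>u\<in>V. \<forall>v\<in>V. E u v \<longrightarrow> c u \<noteq> c v)"
    using assms(1) unfolding choosable_def by blast
qed

lemma exists_inj_choice:
  assumes "finite V" "\<And>v. v \<in> V \<Longrightarrow> finite (L v) \<and> card V \<le> card (L v)"
  shows "\<exists>c. (\<forall>v\<in>V. c v \<in> L v) \<and> inj_on c V"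
  using assms
proof (induction V rule: finite_induct)
  case empty
  then show ?case by simp
next
  case (insert x F)
  then have "\<And>v. v \<in> F \<Longrightarrow> finite (L v) \<and> card F \<le> card (L v)"
    by fastforce
  with insert.IH obtain c where c: "\<forall>v\<in>F. c v \<in> L v" "inj_on c F"
    by blast
  have "card (c ` F) < card (L x)"
    using insert card_image_le[of F c] by fastforce
  then have "\<not> L x \<subseteq> c ` F"
    using insert.hyps(1) by (meson card_mono finite_imageI not_le)
  then obtain y where "y \<in> L x" "y \<notin> c ` F"
    by blast
  with c insert.hyps(2) show ?case
    by (intro exI[of _ "c(x := y)"]) (auto simp: inj_on_def)
qed

lemma choosable_card:
  assumes "finite V" "\<And>u. \<not> E u u"
  shows "choosable V E (card V)"
  unfolding choosable_def
proof (intro allI impI)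
  fix L :: "'a \<Rightarrow> nat set"
  assume "\<forall>v\<in>V. finite (L v) \<and> card V \<le> card (L v)"
  then obtain c where "\<forall>v\<in>V. c v \<in> L v" "inj_on c V"
    using exists_inj_choice[OF assms(1)] by blast
  then show "\<exists>c. (\<forall>v\<in>V. c v \<in> L v) \<and> (\<forall>u\<in>V. \<forall>v\<in>V. E u v \<longrightarrow> c u \<noteq> c v)"
    using assms(2) by (metis inj_onD)
qed

lemma choice_number_gt:
  assumes "finite V" "\<And>u. \<not> E u u" "\<not> choosable V E k"
  shows "k < choice_number V E"
proof -
  have "choosable V E (choice_number V E)"
    unfolding choice_number_def using choosable_card[OF assms(1,2)] by (rule LeastI)
  then show ?thesis
    using assms(3) choosable_mono by (meson not_less)
qed

lemma cmp_vertices_eq_Sigma: "cmp_vertices s n = (SIGMA i:{..s}. {..<n i})"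
  by (auto simp: cmp_vertices_def)

lemma finite_cmp_vertices: "finite (cmp_vertices s n)"
  by (simp add: cmp_vertices_eq_Sigma)

lemma ch_complete_multipartite_gt:
  assumes "\<not> choosable (cmp_vertices s n) cmp_adj k"
  shows "k < ch_complete_multipartite s n"
  unfolding ch_complete_multipartite_def using assms finite_cmp_vertices
  by (intro choice_number_gt) (auto simp: cmp_adj_def)

section \<open>Counting list assignments\<close>

lemma binomial_quotient_ge:
  fixes a N K :: nat
  assumes "K \<le> a" "a \<le> N"
  shows "((real a - real K) / real N) ^ K \<le> real (a choose K) / real (N choose K)"
proof -
  have "real (a choose K) / real (N choose K) = (\<Prod>i<K. (real a - real i) / (real N - real i))"
    unfolding binomial_gbinomial gbinomial_altdef_of_nat prod_dividef[symmetric]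
    using assms by (auto simp: prod_dividef atLeast0LessThan intro!: prod.cong)
  also have "\<dots> \<ge> (\<Prod>i<K. (real a - real K) / real N)"
  proof (rule prod_mono)
    fix i assume "i \<in> {..<K}"
    then have "(real a - real K) / real N \<le> (real a - real i) / real N"
      by (intro divide_right_mono) auto
    also have "\<dots> \<le> (real a - real i) / (real N - real i)"
      using \<open>i \<in> {..<K}\<close> assms by (intro divide_left_mono) auto
    finally show "0 \<le> (real a - real K) / real N \<and>
        (real a - real K) / real N \<le> (real a - real i) / (real N - real i)"
      using assms by auto
  qed
  finally show ?thesis by simp
qed

lemma card_subsets_meeting:
  assumes "A \<subseteq> {..<N}"
  shows "card {S. S \<subseteq> {..<N} \<and> card S = K \<and> S \<inter> A \<noteq> {}} = (N choose K) - ((N - card A) choose K)"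
proof -
  have "{S. S \<subseteq> {..<N} \<and> card S = K \<and> S \<inter> A \<noteq> {}}
      = {S. S \<subseteq> {..<N} \<and> card S = K} - {S. S \<subseteq> {..<N} - A \<and> card S = K}"
    by auto
  moreover have "finite {S. S \<subseteq> {..<N} - A \<and> card S = K}"
    by (rule finite_subset[of _ "Pow {..<N}"]) auto
  moreover have "{S. S \<subseteq> {..<N} - A \<and> card S = K} \<subseteq> {S. S \<subseteq> {..<N} \<and> card S = K}"
    by auto
  moreover have "card ({..<N} - A) = N - card A"
    using assms by (simp add: card_Diff_subset finite_subset)
  ultimately show ?thesis
    by (simp only: card_Diff_subset n_subsets finite_lessThan finite_Diff card_lessThan)
qed

lemma sum_card_fibres:
  assumes "P \<in> A \<rightarrow>\<^sub>E B" "finite A" "finite B"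
  shows "(\<Sum>i\<in>B. card {x\<in>A. P x = i}) = card A"
proof -
  have "\<forall>x\<in>A. {i\<in>B. P x = i} = {P x}"
    using assms(1) by auto
  then show ?thesis
    using sum_multicount[of B A "\<lambda>i x. P x = i" 1] assms(2,3) by simp
qed

lemma palette_partition:
  assumes "\<And>v. v \<in> cmp_vertices s n \<Longrightarrow> c v < N"
    and proper: "\<And>u v. u \<in> cmp_vertices s n \<Longrightarrow> v \<in> cmp_vertices s n \<Longrightarrow> cmp_adj u v \<Longrightarrow> c u \<noteq> c v"
  obtains P where "P \<in> {..<N} \<rightarrow>\<^sub>E {..s}" "\<And>v. v \<in> cmp_vertices s n \<Longrightarrow> P (c v) = fst v"
proof -
  let ?V = "cmp_vertices s n"
  define P where "P x = (if x < N then if x \<in> c ` ?V then fst (inv_into ?V c x) else 0 else undefined)"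
    for x
  have "fst (inv_into ?V c x) \<le> s" if "x \<in> c ` ?V" for x
    using inv_into_into[OF that] by (auto simp: cmp_vertices_def)
  then have "P \<in> {..<N} \<rightarrow>\<^sub>E {..s}"
    unfolding P_def by (simp add: PiE_iff extensional_def)
  moreover have "P (c v) = fst v" if "v \<in> ?V" for v
  proof -
    let ?w = "inv_into ?V c (c v)"
    have "?w \<in> ?V" "c ?w = c v"
      using that by (simp_all add: inv_into_into f_inv_into_f)
    then have "fst ?w = fst v"
      using proper[of ?w v] that unfolding cmp_adj_def by blast
    then show ?thesis
      using assms(1)[OF that] that by (simp add: P_def)
  qed
  ultimately show thesis
    by (rule that)
qed

lemma one_minus_power_lt:
  fixes q :: real and m s N :: nat
  assumes "0 \<le> q" "q \<le> 1" "real s * real N < real m * q"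
  shows "(1 - q) ^ m < 1 / real (s + 1) ^ N"
proof -
  have "(1 - q) ^ m \<le> exp (- q) ^ m"
    using exp_ge_add_one_self[of "- q"] assms(1,2) by (intro power_mono) auto
  also have "\<dots> = exp (- (real m * q))"
    by (simp flip: exp_of_nat_mult)
  also have "\<dots> < exp (- (real s * real N))"
    using assms(3) by simp
  also have "\<dots> = 1 / exp (real s) ^ N"
    by (simp add: exp_minus mult.commute inverse_eq_divide flip: exp_of_nat_mult)
  also have "\<dots> \<le> 1 / real (s + 1) ^ N"
    using exp_ge_add_one_self[of "real s"] by (intro divide_left_mono power_mono) (auto simp: add.commute)
  finally show ?thesis .
qed

lemma card_assignments_meeting_class_lt:
  fixes C :: "nat \<Rightarrow> nat set"
  assumes "K \<le> N" "\<And>j. C j \<subseteq> {..<N}" "i \<le> s"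
    and sparse: "real (n i) * (real ((N - card (C i)) choose K) / real (N choose K)) > real s * real N"
  shows "real (card (PiE (cmp_vertices s n)
              (\<lambda>v. {S. S \<subseteq> {..<N} \<and> card S = K \<and> S \<inter> C (fst v) \<noteq> {}})))
         < real (N choose K) ^ card (cmp_vertices s n) / real (s + 1) ^ N"
proof -
  define V where "V = cmp_vertices s n"
  define b where "b = N choose K"
  define q where "q j = real ((N - card (C j)) choose K) / real b" for j
  have "0 < b"
    using assms(1) by (simp add: b_def)
  have q: "0 \<le> q j" "q j \<le> 1" for j
    using binomial_right_mono[of "N - card (C j)" N K] \<open>0 < b\<close> by (auto simp: q_def b_def)
  have card_meet: "real (card {S. S \<subseteq> {..<N} \<and> card S = K \<and> S \<inter> C j \<noteq> {}}) = real b * (1 - q j)" for j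
    using card_subsets_meeting[OF assms(2)[of j]] binomial_right_mono[of "N - card (C j)" N K] \<open>0 < b\<close>
    by (simp add: q_def b_def of_nat_diff field_simps)
  have "{i} \<times> {..<n i} \<subseteq> V"
    using assms(3) by (auto simp: V_def cmp_vertices_def)
  then have "(\<Prod>v\<in>V. 1 - q (fst v))
      = (\<Prod>v\<in>V - {i} \<times> {..<n i}. 1 - q (fst v)) * (\<Prod>v\<in>{i} \<times> {..<n i}. 1 - q (fst v))"
    using prod.subset_diff finite_cmp_vertices V_def by blast
  also have "\<dots> \<le> (\<Prod>v\<in>{i} \<times> {..<n i}. 1 - q (fst v))"
    using q by (intro mult_left_le_one_le prod_le_1 prod_nonneg) auto
  also have "\<dots> = (\<Prod>v\<in>{i} \<times> {..<n i}. 1 - q i)"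
    by (rule prod.cong) auto
  also have "\<dots> = (1 - q i) ^ n i"
    by (simp add: card_cartesian_product)
  also have "\<dots> < 1 / real (s + 1) ^ N"
    using q[of i] sparse by (intro one_minus_power_lt) (simp_all add: q_def b_def)
  finally have "(\<Prod>v\<in>V. 1 - q (fst v)) < 1 / real (s + 1) ^ N" .
  then have "real b ^ card V * (\<Prod>v\<in>V. 1 - q (fst v)) < real b ^ card V / real (s + 1) ^ N"
    using \<open>0 < b\<close> by (simp add: field_simps)
  moreover have "real (card (PiE V (\<lambda>v. {S. S \<subseteq> {..<N} \<and> card S = K \<and> S \<inter> C (fst v) \<noteq> {}})))
      = real b ^ card V * (\<Prod>v\<in>V. 1 - q (fst v))"
    using finite_cmp_vertices by (simp add: V_def card_PiE of_nat_prod card_meet prod.distrib)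
  ultimately show ?thesis
    by (simp add: V_def b_def)
qed

lemma not_choosable_if_sparse_class:
  assumes "K \<le> N"
    and sparse: "\<And>P. P \<in> {..<N} \<rightarrow>\<^sub>E {..s} \<Longrightarrow> \<exists>i\<le>s.
      real (n i) * (real ((N - card {x\<in>{..<N}. P x = i}) choose K) / real (N choose K)) > real s * real N"
  shows "\<not> choosable (cmp_vertices s n) cmp_adj K"
proof
  assume ch: "choosable (cmp_vertices s n) cmp_adj K"
  define V where "V = cmp_vertices s n"
  define Lists where "Lists = {S. S \<subseteq> {..<N} \<and> card S = K}"
  define Parts where "Parts = {..<N} \<rightarrow>\<^sub>E {..s}"
  define Meet where "Meet P = PiE V
      (\<lambda>v. {S. S \<subseteq> {..<N} \<and> card S = K \<and> S \<inter> {x\<in>{..<N}. P x = fst v} \<noteq> {}})" for P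
  have fin: "finite V" "finite Parts" "finite (Meet P)" for P
    unfolding V_def Parts_def Meet_def using finite_cmp_vertices
    by (auto intro!: finite_PiE intro: finite_subset[of _ "Pow {..<N}"])
  have "V \<rightarrow>\<^sub>E Lists \<subseteq> (\<Union>P\<in>Parts. Meet P)"
  proof
    fix L assume L: "L \<in> V \<rightarrow>\<^sub>E Lists"
    then have "\<forall>v\<in>V. finite (L v) \<and> K \<le> card (L v)"
      by (auto simp: Lists_def PiE_iff intro: finite_subset[of _ "{..<N}"])
    then obtain c where c: "\<forall>v\<in>V. c v \<in> L v" "\<forall>u\<in>V. \<forall>v\<in>V. cmp_adj u v \<longrightarrow> c u \<noteq> c v"
      using ch unfolding choosable_def V_def by blast
    moreover have cN: "\<forall>v\<in>V. c v < N"
      using c(1) L by (auto simp: Lists_def PiE_iff)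
    ultimately obtain P where P: "P \<in> Parts" "\<And>v. v \<in> V \<Longrightarrow> P (c v) = fst v"
      using palette_partition[of s n c N] unfolding V_def Parts_def by blast
    have "L \<in> Meet P"
      using L c(1) cN P(2) by (auto simp: Meet_def Lists_def PiE_iff)
    with P(1) show "L \<in> (\<Union>P\<in>Parts. Meet P)"
      by blast
  qed
  then have "card (V \<rightarrow>\<^sub>E Lists) \<le> card (\<Union>P\<in>Parts. Meet P)"
    using fin by (intro card_mono) auto
  also have "\<dots> \<le> (\<Sum>P\<in>Parts. card (Meet P))"
    by (rule card_UN_le[OF fin(2)])
  finally have "real (card (V \<rightarrow>\<^sub>E Lists)) \<le> (\<Sum>P\<in>Parts. real (card (Meet P)))"
    by (metis of_nat_le_iff of_nat_sum)
  also have "\<dots> < (\<Sum>P\<in>Parts. real (N choose K) ^ card V / real (s + 1) ^ N)"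
  proof (rule sum_strict_mono)
    fix P assume "P \<in> Parts"
    then obtain i where "i \<le> s"
      "real (n i) * (real ((N - card {x\<in>{..<N}. P x = i}) choose K) / real (N choose K)) > real s * real N"
      using sparse unfolding Parts_def by blast
    then show "real (card (Meet P)) < real (N choose K) ^ card V / real (s + 1) ^ N"
      unfolding Meet_def V_def using assms(1) by (intro card_assignments_meeting_class_lt) auto
  qed (use fin in \<open>auto simp: Parts_def PiE_eq_empty_iff\<close>)
  also have "\<dots> = real (card (V \<rightarrow>\<^sub>E Lists))"
    using fin by (simp add: Parts_def Lists_def card_PiE n_subsets)
  finally show False
    by simp
qed

section \<open>The root x_0\<close>

lemma root_equation_normal_form:
  fixes x L :: real and l :: "nat \<Rightarrow> real"
  assumes "0 < x" "0 < L" "\<And>j. j < s \<Longrightarrow> 0 < l j"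
  shows "real s * x - 1 - (\<Sum>j<s. x powr ((L / l j - 1) / (L / l j))) = 0
     \<longleftrightarrow> real s = 1 / x + (\<Sum>j<s. x powr (- l j / L))"
proof -
  have "x powr ((L / l j - 1) / (L / l j)) = x * x powr (- l j / L)" if "j < s" for j
  proof -
    have "(L / l j - 1) / (L / l j) = 1 + - l j / L"
      using assms(2) assms(3)[OF that] by (simp add: field_simps)
    then show ?thesis
      using assms(1) by (simp add: powr_diff powr_minus_divide)
  qed
  then have "(\<Sum>j<s. x powr ((L / l j - 1) / (L / l j))) = x * (\<Sum>j<s. x powr (- l j / L))"
    by (simp add: sum_distrib_left)
  then show ?thesis
    using assms(1) by (auto simp: field_simps)
qed

lemma root_ge:
  fixes x :: real and a :: "nat \<Rightarrow> real"
  assumes "1 \<le> s" "1 \<le> x" "\<And>j. j < s \<Longrightarrow> a j \<le> 1"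
    and root: "real s = 1 / x + (\<Sum>j<s. x powr (- a j))"
  shows "1 + 1 / real s \<le> x"
proof -
  have "1 / x \<le> x powr (- a j)" if "j < s" for j
    using powr_mono[of "- 1" "- a j" x] assms(2) assms(3)[OF that] by (simp add: powr_minus_divide)
  then have "real s * (1 / x) \<le> (\<Sum>j<s. x powr (- a j))"
    using sum_mono[of "{..<s}" "\<lambda>_. 1 / x"] by simp
  then have "real s / x + 1 / x \<le> real s"
    using root by simp
  then have "real s + 1 \<le> real s * x"
    using assms(2) by (simp add: field_simps)
  then show ?thesis
    using assms(1) by (simp add: field_simps)
qed

lemma root_first_term:
  fixes x :: real and a :: "nat \<Rightarrow> real"
  assumes "1 \<le> s" "1 \<le> x" "\<And>j. j < s \<Longrightarrow> 0 \<le> a j"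
    and root: "real s = 1 / x + (\<Sum>j<s. x powr (- a j))"
  shows "(x - 1) * ln x * a 0 \<le> 1"
proof -
  define u where "u = a 0 * ln x"
  have "0 \<le> u"
    using assms(1-3) by (simp add: u_def)
  have "x powr (- a j) \<le> 1" if "j < s" for j
    using powr_mono[of "- a j" 0 x] assms(2) assms(3)[OF that] by simp
  then have "1 - x powr (- a 0) \<le> (\<Sum>j<s. 1 - x powr (- a j))"
    using assms(1) by (intro member_le_sum) auto
  also have "\<dots> = 1 / x"
    using root by (simp add: sum_subtractf)
  finally have "1 - 1 / x \<le> exp (- u)"
    using assms(2) by (simp add: u_def powr_def)
  also have "\<dots> \<le> 1 / (1 + u)"
    using exp_ge_add_one_self[of u] \<open>0 \<le> u\<close> by (simp add: exp_minus field_simps)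
  finally have "u * (x - 1) \<le> 1"
    using \<open>0 \<le> u\<close> assms(2) by (simp add: field_simps)
  then show ?thesis
    by (simp add: u_def algebra_simps)
qed

lemma sum_dilated_root_terms_le:
  fixes x \<theta> g :: real and a :: "nat \<Rightarrow> real"
  assumes "1 \<le> x" "1 \<le> \<theta>" "\<And>j. j < s \<Longrightarrow> 0 \<le> a j" "a s = 1"
    and root: "real s = 1 / x + (\<Sum>j<s. x powr (- a j))"
    and "g \<le> 1 / x - x powr (- \<theta>)"
  shows "(\<Sum>j\<le>s. x powr (- \<theta> * a j)) \<le> real s - g"
proof -
  have "x powr (- \<theta> * a j) \<le> x powr (- a j)" if "j < s" for j
  proof -
    have "a j \<le> \<theta> * a j"
      using mult_right_mono[of 1 \<theta> "a j"] assms(2) assms(3)[OF that] by simp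
    then show ?thesis
      using assms(1) by (intro powr_mono) auto
  qed
  then have "(\<Sum>j<s. x powr (- \<theta> * a j)) \<le> real s - 1 / x"
    using sum_mono[of "{..<s}" "\<lambda>j. x powr (- \<theta> * a j)"] root by fastforce
  then show ?thesis
    using assms(4,6) by (simp flip: lessThan_Suc_atMost)
qed

lemma ln_2_ge_half: "1 / 2 \<le> ln (2 :: real)"
proof -
  have "exp (1 / 2 :: real) \<le> 2"
    using exp_bound_lemma[of "1 / 2 :: real"] by simp
  then show ?thesis
    by (subst ln_ge_iff) auto
qed

lemma root_times_log_le:
  fixes x B :: real and a :: "nat \<Rightarrow> real"
  assumes "1 \<le> s" "1 \<le> x" "\<And>j. j < s \<Longrightarrow> 0 \<le> a j \<and> a j \<le> 1" "0 < a 0" "2 \<le> a 0 * B"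
    and root: "real s = 1 / x + (\<Sum>j<s. x powr (- a j))"
  shows "x * log 2 x \<le> (real s + 1) * B"
proof -
  have "x \<le> (real s + 1) * (x - 1)"
    using root_ge[OF assms(1,2) _ root] assms(1,3) by (simp add: field_simps)
  then have "x * log 2 x \<le> (real s + 1) * ((x - 1) * log 2 x)"
    using assms(2) mult_right_mono[of x "(real s + 1) * (x - 1)" "log 2 x"] by (simp add: mult.assoc)
  moreover have "log 2 x \<le> 2 * ln x"
  proof -
    have "ln x / ln 2 \<le> ln x / (1 / 2)"
      using ln_2_ge_half assms(2) by (intro divide_left_mono) auto
    then show ?thesis
      by (simp add: log_def)
  qed
  moreover have "(x - 1) * ln x \<le> 1 / a 0"
    using root_first_term[OF assms(1,2) _ root] assms(3,4) by (simp add: field_simps)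
  ultimately have "(x - 1) * log 2 x \<le> 2 / a 0"
    using assms(2) mult_left_mono[of "log 2 x" "2 * ln x" "x - 1"] by simp
  also have "\<dots> \<le> B"
    using assms(4,5) by (simp add: field_simps)
  finally have "(real s + 1) * ((x - 1) * log 2 x) \<le> (real s + 1) * B"
    by (intro mult_left_mono) auto
  with \<open>x * log 2 x \<le> (real s + 1) * ((x - 1) * log 2 x)\<close> show ?thesis
    by linarith
qed

lemma inverse_minus_powr_ge:
  fixes b x \<epsilon> :: real
  assumes "1 < b" "b \<le> x" "0 < \<epsilon>" "\<epsilon> < 1"
  shows "(1 - b powr (- \<epsilon>)) / x \<le> 1 / x - x powr (- (1 / (1 - \<epsilon>)))"
proof -
  have "1 - 1 / (1 - \<epsilon>) \<le> - \<epsilon>"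
    using assms(3,4) by (simp add: field_simps)
  then have "x powr (1 - 1 / (1 - \<epsilon>)) \<le> x powr (- \<epsilon>)"
    using assms(1,2) by (intro powr_mono) auto
  also have "\<dots> \<le> b powr (- \<epsilon>)"
    using assms by (intro powr_mono2') auto
  finally have "(1 - b powr (- \<epsilon>)) / x \<le> (1 - x powr (1 - 1 / (1 - \<epsilon>))) / x"
    using assms(1,2) by (intro divide_right_mono) auto
  also have "\<dots> = 1 / x - x powr (- (1 / (1 - \<epsilon>)))"
    using assms(1,2) by (simp add: powr_diff diff_divide_distrib powr_minus_divide)
  finally show ?thesis .
qed

section \<open>A sparse class in every palette partition\<close>

lemma fraction_outside_class_le:
  fixes N K c m :: nat and B :: real
  assumes "1 \<le> K" "c \<le> N" "0 < m" "0 < B"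
    and "real m * (real ((N - c) choose K) / real (N choose K)) \<le> B"
  shows "(real N - real c - real K) / real N \<le> (B / real m) powr (1 / real K)"
proof (cases "real c + real K < real N")
  case False
  then have "(real N - real c - real K) / real N \<le> 0"
    by (intro divide_nonpos_nonneg) auto
  then show ?thesis
    using powr_ge_zero[of "B / real m" "1 / real K"] by linarith
next
  case True
  define y where "y = (real N - real c - real K) / real N"
  have "0 < y"
    using True by (simp add: y_def)
  have "y ^ K \<le> real ((N - c) choose K) / real (N choose K)"
    using binomial_quotient_ge[of K "N - c" N] True assms(2) by (simp add: y_def of_nat_diff)
  also have "\<dots> \<le> B / real m"
    using assms(3,5) by (simp add: field_simps)
  finally have "(y ^ K) powr (1 / real K) \<le> (B / real m) powr (1 / real K)"
    using \<open>0 < y\<close> by (intro powr_mono2) auto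
  moreover have "(y ^ K) powr (1 / real K) = y"
    using \<open>0 < y\<close> assms(1) by (simp add: powr_realpow [symmetric] powr_powr)
  ultimately show ?thesis
    by (simp add: y_def)
qed

lemma powr_inverse_le_one_plus:
  fixes x k g :: real and s :: nat
  assumes "1 \<le> x" "0 < k" "1 \<le> s" "g \<le> 1" "ln x / k \<le> g / (4 * real s)"
  shows "x powr (1 / k) \<le> 1 + g / (2 * real s)"
proof -
  have "g / (4 * real s) \<le> 1 / 2"
    using assms(3,4) by (simp add: field_simps)
  then have "ln x / k \<le> 1 / 2"
    using assms(5) by linarith
  then have "exp (ln x / k) \<le> 1 + 2 * (ln x / k)"
    using exp_bound_lemma[of "ln x / k"] assms(1,2) by simp
  then show ?thesis
    using assms(1,5) by (simp add: powr_def)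
qed

lemma sum_fractions_outside_classes:
  fixes N K :: nat and c :: "nat \<Rightarrow> nat"
  assumes "0 < N" "(\<Sum>i\<le>s. c i) = N"
  shows "(\<Sum>i\<le>s. (real N - real (c i) - real K) / real N) = real s - real (s + 1) * real K / real N"
proof -
  have "(\<Sum>i\<le>s. real (c i)) = real N"
    using assms(2) by (metis of_nat_sum)
  then show ?thesis
    using assms(1) by (simp add: sum_divide_distrib[symmetric] sum_subtractf sum.distrib field_simps)
qed

lemma powr_inverse_quotient_le:
  fixes B L x \<theta> :: real and m K :: nat
  assumes "0 < B" "1 \<le> m" "1 \<le> K" "0 < L" "1 \<le> x" "real K * \<theta> * log 2 x \<le> L"
  shows "(B / real m) powr (1 / real K) \<le> B powr (1 / real K) * x powr (- \<theta> * log 2 (real m) / L)"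
proof -
  have "(B / real m) powr (1 / real K) = B powr (1 / real K) / real m powr (1 / real K)"
    using assms(1,2) by (simp add: powr_divide)
  also have "\<dots> \<le> B powr (1 / real K) / real m powr (\<theta> * log 2 x / L)"
    using assms by (intro divide_left_mono powr_mono) (auto simp: field_simps)
  also have "real m powr (\<theta> * log 2 x / L) = 1 / x powr (- \<theta> * log 2 (real m) / L)"
    using assms(2,5) by (simp add: powr_def log_def exp_minus field_simps)
  finally show ?thesis
    by simp
qed

lemma exists_sparse_class:
  fixes s K N :: nat and n c :: "nat \<Rightarrow> nat" and x0 \<theta> g :: real
  defines "L \<equiv> log 2 (real (n s))"
  assumes s: "1 \<le> s" and K: "1 \<le> K" "K \<le> N" and n: "\<And>i. i \<le> s \<Longrightarrow> 1 \<le> n i"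
    and L: "0 < L" and x0: "1 \<le> x0"
    and root: "real s = 1 / x0 + (\<Sum>j<s. x0 powr (- log 2 (real (n j)) / L))"
    and \<theta>: "1 \<le> \<theta>" "real K * \<theta> * log 2 x0 \<le> L"
    and g: "0 < g" "g \<le> 1" "g \<le> 1 / x0 - x0 powr (- \<theta>)"
    and list_ratio: "real (s + 1) * real K / real N \<le> g / 2"
    and log_ratio: "ln (real s * real N) / real K \<le> g / (4 * real s)"
    and classes: "(\<Sum>i\<le>s. c i) = N"
  shows "\<exists>i\<le>s. real (n i) * (real ((N - c i) choose K) / real (N choose K)) > real s * real N"
proof (rule ccontr)
  assume no_sparse: "\<not> ?thesis"
  define a where "a i = log 2 (real (n i)) / L" for i
  define M where "M = (real s * real N) powr (1 / real K)"
  have "0 < N"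
    using K by simp
  have class_bound: "(real N - real (c i) - real K) / real N \<le> M * x0 powr (- \<theta> * a i)"
    if "i \<le> s" for i
  proof -
    have "c i \<le> N"
      using classes that by (metis atMost_iff finite_atMost member_le_sum zero_le)
    then have "(real N - real (c i) - real K) / real N \<le> (real s * real N / real (n i)) powr (1 / real K)"
      using no_sparse that s K(1) n[OF that] \<open>0 < N\<close> by (intro fraction_outside_class_le) (auto simp: not_less)
    also have "\<dots> \<le> M * x0 powr (- \<theta> * a i)"
      using powr_inverse_quotient_le[of "real s * real N" "n i" K L x0 \<theta>] s \<open>0 < N\<close> n[OF that] K(1) L x0 \<theta>(2)
      by (simp add: M_def a_def)
    finally show ?thesis .
  qed
  have "0 \<le> a i" if "i < s" for i
    using n[of i] L that by (simp add: a_def)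
  moreover have "a s = 1" "real s = 1 / x0 + (\<Sum>j<s. x0 powr (- a j))"
    using L root by (simp_all add: a_def L_def)
  ultimately have sum_terms: "(\<Sum>i\<le>s. x0 powr (- \<theta> * a i)) \<le> real s - g"
    using sum_dilated_root_terms_le[OF x0 \<theta>(1) _ _ _ g(3)] by blast
  have "1 \<le> real s * real N"
    using mult_mono[of 1 "real s" 1 "real N"] s \<open>0 < N\<close> by simp
  then have M_le: "M \<le> 1 + g / (2 * real s)"
    unfolding M_def using K(1) s g(2) log_ratio by (intro powr_inverse_le_one_plus) auto
  have "real s - real (s + 1) * real K / real N \<le> (\<Sum>i\<le>s. M * x0 powr (- \<theta> * a i))"
    unfolding sum_fractions_outside_classes[OF \<open>0 < N\<close> classes, symmetric]
    using class_bound by (intro sum_mono) auto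
  also have "\<dots> \<le> M * (real s - g)"
    using sum_terms by (simp add: M_def sum_distrib_left[symmetric] mult_left_mono)
  also have "\<dots> \<le> (1 + g / (2 * real s)) * (real s - g)"
    using M_le s g(2) by (intro mult_right_mono) auto
  also have "\<dots> = real s - g / 2 - g\<^sup>2 / (2 * real s)"
    using s by (simp add: field_simps power2_eq_square)
  also have "\<dots> < real s - g / 2"
    using s g(1) by simp
  finally show False
    using list_ratio by simp
qed

lemma ch_complete_multipartite_gt_of_parameters:
  fixes s K N :: nat and n :: "nat \<Rightarrow> nat" and x \<theta> g :: real
  defines "L \<equiv> log 2 (real (n s))"
  assumes s: "1 \<le> s" and K: "1 \<le> K" "K \<le> N" and n: "\<And>i. i \<le> s \<Longrightarrow> 1 \<le> n i"
    and L: "0 < L" and x: "1 \<le> x"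
    and root: "real s = 1 / x + (\<Sum>j<s. x powr (- log 2 (real (n j)) / L))"
    and params: "1 \<le> \<theta>" "real K * \<theta> * log 2 x \<le> L" "0 < g" "g \<le> 1" "g \<le> 1 / x - x powr (- \<theta>)"
      "real (s + 1) * real K / real N \<le> g / 2" "ln (real s * real N) / real K \<le> g / (4 * real s)"
  shows "K < ch_complete_multipartite s n"
proof (rule ch_complete_multipartite_gt, rule not_choosable_if_sparse_class[OF K(2)])
  fix P assume "P \<in> {..<N} \<rightarrow>\<^sub>E {..s}"
  then have "(\<Sum>i\<le>s. card {y\<in>{..<N}. P y = i}) = N"
    using sum_card_fibres[of P "{..<N}" "{..s}"] by simp
  then show "\<exists>i\<le>s. real (n i) * (real ((N - card {y\<in>{..<N}. P y = i}) choose K) / real (N choose K))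
      > real s * real N"
    using exists_sparse_class[OF s K n L[unfolded L_def] x root[unfolded L_def] params[unfolded L_def]]
    by blast
qed

section \<open>Choice of the parameters\<close>

lemma two_sqrt_le_log_powr:
  fixes L \<alpha> :: real
  assumes "2 \<le> L" "2 * sqrt (L / log 2 L) \<le> \<alpha>"
  shows "2 * sqrt L \<le> log 2 (L powr \<alpha>)"
proof -
  have "1 \<le> log 2 L"
    using assms(1) by simp
  have "sqrt L \<le> sqrt (L * log 2 L)"
    using \<open>1 \<le> log 2 L\<close> assms(1) by simp
  also have "\<dots> = sqrt (L / log 2 L) * log 2 L"
  proof -
    have "L * log 2 L = (L / log 2 L) * (log 2 L)\<^sup>2"
      using \<open>1 \<le> log 2 L\<close> by (simp add: power2_eq_square)
    then have "sqrt (L * log 2 L) = sqrt (L / log 2 L) * sqrt ((log 2 L)\<^sup>2)"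
      by (metis real_sqrt_mult)
    then show ?thesis
      using \<open>1 \<le> log 2 L\<close> by simp
  qed
  finally have "2 * sqrt L \<le> 2 * sqrt (L / log 2 L) * log 2 L"
    by simp
  also have "\<dots> \<le> \<alpha> * log 2 L"
    using assms(2) \<open>1 \<le> log 2 L\<close> by (intro mult_right_mono) auto
  also have "\<dots> = log 2 (L powr \<alpha>)"
    using assms(1) by (simp add: log_powr)
  finally show ?thesis .
qed

lemma list_palette_ratio_le:
  fixes s K N :: nat and L X x d c :: real
  assumes L: "0 < L" and d: "0 < d" "d \<le> X" and x: "1 \<le> x" and c: "0 \<le> c"
    and K: "real K \<le> L / X" and xX: "x * X \<le> (real s + 1) * sqrt L" and N: "L * L \<le> real N"
    and large: "2 * (real s + 1)\<^sup>2 * sqrt L \<le> c * d\<^sup>2 * L"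
  shows "real (s + 1) * real K / real N \<le> c / x / 2"
proof -
  have "0 < real N"
    using L N mult_pos_pos[of L L] by linarith
  have "real K * x \<le> L * (x * X) / X\<^sup>2"
    using d x K by (simp add: power2_eq_square field_simps mult_right_mono)
  also have "\<dots> \<le> L * ((real s + 1) * sqrt L) / d\<^sup>2"
    using L d x xX by (intro frac_le mult_left_mono power_mono) auto
  finally have "2 * (real s + 1) * (real K * x)
      \<le> 2 * (real s + 1) * (L * ((real s + 1) * sqrt L) / d\<^sup>2)"
    by (intro mult_left_mono) auto
  also have "\<dots> = L * (2 * (real s + 1)\<^sup>2 * sqrt L) / d\<^sup>2"
    by (simp add: power2_eq_square)
  also have "\<dots> \<le> L * (c * d\<^sup>2 * L) / d\<^sup>2"
    using L large by (intro divide_right_mono mult_left_mono) auto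
  also have "\<dots> = c * (L * L)"
    using d by simp
  also have "\<dots> \<le> c * real N"
    using N c by (rule mult_left_mono)
  finally show ?thesis
    using \<open>0 < real N\<close> x by (simp add: field_simps)
qed

lemma log_palette_list_ratio_le:
  fixes s K N :: nat and L X x c :: real
  assumes s: "1 \<le> s" and K: "1 \<le> K" "L / (2 * X) - 1 \<le> real K" and N: "1 \<le> N" "real N \<le> (L + 1)\<^sup>2"
    and L: "0 < L" "real s \<le> L + 1" and X: "0 < X" and x: "1 \<le> x" and c: "0 \<le> c" "c \<le> 1"
    and xX: "x * X \<le> (real s + 1) * sqrt L"
    and large: "24 * real s * (real s + 1) * sqrt L * ln (L + 1) + 2 * (real s + 1) * sqrt L \<le> c * L"
  shows "ln (real s * real N) / real K \<le> c / x / (4 * real s)"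
proof -
  have "real s * real N \<le> (L + 1) ^ 3"
    using mult_mono[OF L(2) N(2)] L(1) by (simp add: power2_eq_square power3_eq_cube)
  then have "ln (real s * real N) \<le> ln ((L + 1) ^ 3)"
    using s N(1) by (intro ln_mono) auto
  then have log_sN: "ln (real s * real N) \<le> 3 * ln (L + 1)"
    using L(1) by (simp add: ln_realpow)
  have "24 * real s * (x * X) * ln (L + 1) \<le> 24 * real s * ((real s + 1) * sqrt L) * ln (L + 1)"
    using L(1) xX by (intro mult_right_mono mult_left_mono) auto
  moreover have "c * X \<le> (real s + 1) * sqrt L"
  proof -
    have "c * X \<le> X" "X \<le> x * X"
      using X x c(2) by simp_all
    then show ?thesis
      using xX by linarith
  qed
  ultimately have "12 * real s * x * ln (L + 1) \<le> c * (L / (2 * X) - 1)"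
    using large X by (simp add: field_simps)
  also have "\<dots> \<le> c * real K"
    using K(2) c(1) by (intro mult_left_mono)
  finally have "4 * real s * x * (3 * ln (L + 1)) \<le> c * real K"
    by simp
  moreover have "4 * real s * x * ln (real s * real N) \<le> 4 * real s * x * (3 * ln (L + 1))"
    using log_sN x by (intro mult_left_mono) auto
  ultimately have "4 * real s * x * ln (real s * real N) \<le> c * real K"
    by linarith
  then show ?thesis
    using s K(1) x by (simp add: field_simps)
qed

text \<open>The growth conditions on L = log n_s on which the choice of K and N below relies.\<close>

definition sufficiently_large :: "nat \<Rightarrow> real \<Rightarrow> real \<Rightarrow> bool" where
  "sufficiently_large s \<epsilon> L \<longleftrightarrow>
     4 \<le> L \<and> real s \<le> L + 1 \<and> 1 \<le> log 2 (1 + 1 / real s) * L \<and>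
     2 * (real s + 1) * sqrt L \<le> L \<and>
     2 * (real s + 1)\<^sup>2 * sqrt L
       \<le> (1 - (1 + 1 / real s) powr (- \<epsilon>)) * (log 2 (1 + 1 / real s))\<^sup>2 * L \<and>
     24 * real s * (real s + 1) * sqrt L * ln (L + 1) + 2 * (real s + 1) * sqrt L
       \<le> (1 - (1 + 1 / real s) powr (- \<epsilon>)) * L"

lemma sufficiently_large_constants_pos:
  assumes "1 \<le> s" "0 < \<epsilon>"
  shows "0 < log 2 (1 + 1 / real s)" "0 < 1 - (1 + 1 / real s) powr (- \<epsilon>)"
    "1 - (1 + 1 / real s) powr (- \<epsilon>) \<le> 1"
proof -
  have "1 < 1 + 1 / real s"
    using assms(1) by simp
  moreover have "0 < 1 + 1 / real s"
    using assms(1) by (simp add: add_pos_nonneg)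
  ultimately show "0 < log 2 (1 + 1 / real s)" "0 < 1 - (1 + 1 / real s) powr (- \<epsilon>)"
    using assms(2) by (simp_all add: powr_less_one)
qed simp

lemma list_size_choice:
  fixes L X \<epsilon> :: real
  assumes "0 < X" "2 * X \<le> L" "0 < \<epsilon>" "\<epsilon> \<le> 1 / 2"
  obtains K :: nat where "1 \<le> K" "real K \<le> (1 - \<epsilon>) * L / X" "(1 - \<epsilon>) * L / X < real K + 1"
    "L / (2 * X) - 1 \<le> real K" "real K \<le> L / X"
proof -
  define y where "y = (1 - \<epsilon>) * L / X"
  have "1 \<le> L / (2 * X)"
    using assms(1,2) by (simp add: field_simps)
  moreover have "L / (2 * X) \<le> y"
    using assms by (simp add: y_def field_simps)
  moreover have "y \<le> L / X"
    unfolding y_def using assms by (intro divide_right_mono mult_left_le_one_le) auto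
  moreover have "of_int \<lfloor>y\<rfloor> \<le> y" "y < of_int \<lfloor>y\<rfloor> + 1"
    by linarith+
  ultimately have "1 \<le> nat \<lfloor>y\<rfloor>" "real (nat \<lfloor>y\<rfloor>) = of_int \<lfloor>y\<rfloor>"
    by (simp_all add: le_nat_iff le_floor_iff)
  then show thesis
    using \<open>of_int \<lfloor>y\<rfloor> \<le> y\<close> \<open>y < of_int \<lfloor>y\<rfloor> + 1\<close> \<open>L / (2 * X) \<le> y\<close> \<open>y \<le> L / X\<close>
    unfolding y_def by (intro that[of "nat \<lfloor>(1 - \<epsilon>) * L / X\<rfloor>"]) linarith+
qed

lemma admissible_parameters:
  fixes s :: nat and \<epsilon> L x :: real
  assumes s: "1 \<le> s" and \<epsilon>: "0 < \<epsilon>" "\<epsilon> \<le> 1 / 2" and large: "sufficiently_large s \<epsilon> L"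
    and x: "1 + 1 / real s \<le> x" "x * log 2 x \<le> (real s + 1) * sqrt L"
  obtains K N :: nat and \<theta> g :: real where
    "1 \<le> K" "K \<le> N" "1 \<le> \<theta>" "real K * \<theta> * log 2 x \<le> L"
    "0 < g" "g \<le> 1" "g \<le> 1 / x - x powr (- \<theta>)"
    "real (s + 1) * real K / real N \<le> g / 2" "ln (real s * real N) / real K \<le> g / (4 * real s)"
    "(1 - \<epsilon>) * L / log 2 x < real K + 1"
proof -
  define X where "X = log 2 x"
  define d where "d = log 2 (1 + 1 / real s)"
  define c where "c = 1 - (1 + 1 / real s) powr (- \<epsilon>)"
  define N where "N = (nat \<lceil>L\<rceil>)\<^sup>2"
  have L: "4 \<le> L" "real s \<le> L + 1" "1 \<le> d * L" "2 * (real s + 1) * sqrt L \<le> L"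
    and large_c: "2 * (real s + 1)\<^sup>2 * sqrt L \<le> c * d\<^sup>2 * L"
      "24 * real s * (real s + 1) * sqrt L * ln (L + 1) + 2 * (real s + 1) * sqrt L \<le> c * L"
    using large unfolding sufficiently_large_def d_def c_def by auto
  have "0 < d" "0 < c" "c \<le> 1"
    using sufficiently_large_constants_pos[OF s \<epsilon>(1)] by (simp_all add: d_def c_def)
  have "0 < 1 / real s" "0 < 1 + 1 / real s"
    using s by (simp_all add: add_pos_nonneg)
  then have "1 < x" "d \<le> X"
    using x(1) unfolding d_def X_def by (linarith, intro log_mono) auto
  then have "0 < X" "X \<le> x * X"
    using \<open>0 < d\<close> by simp_all
  moreover have xX: "x * X \<le> (real s + 1) * sqrt L"
    using x(2) by (simp add: X_def)
  ultimately have "2 * X \<le> L"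
    using L(4) by linarith
  then obtain K where K: "1 \<le> K" "real K \<le> (1 - \<epsilon>) * L / X" "(1 - \<epsilon>) * L / X < real K + 1"
    "L / (2 * X) - 1 \<le> real K" "real K \<le> L / X"
    using list_size_choice[OF \<open>0 < X\<close> _ \<epsilon>] by blast
  have N: "L * L \<le> real N" "real N \<le> (L + 1)\<^sup>2"
    using L(1) unfolding N_def by (auto intro: mult_mono power_mono simp: power2_eq_square)
  have "L / X \<le> L / d"
    using L(1) \<open>0 < d\<close> \<open>d \<le> X\<close> by (intro divide_left_mono) auto
  also have "\<dots> \<le> L * L"
    using L(1,3) \<open>0 < d\<close> by (simp add: field_simps)
  finally have "K \<le> N"
    using N(1) K(5) by linarith
  show thesis
  proof (rule that[of K N "1 / (1 - \<epsilon>)" "c / x"])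
    show "c / x \<le> 1 / x - x powr (- (1 / (1 - \<epsilon>)))"
      using inverse_minus_powr_ge[of "1 + 1 / real s" x \<epsilon>] x(1) \<epsilon> \<open>0 < 1 / real s\<close>
      by (simp add: c_def)
    show "real (s + 1) * real K / real N \<le> c / x / 2"
      using L(1) \<open>1 < x\<close> \<open>0 < c\<close> \<open>0 < d\<close> \<open>d \<le> X\<close> K(5) xX N(1) large_c(1)
      by (intro list_palette_ratio_le) auto
    show "ln (real s * real N) / real K \<le> c / x / (4 * real s)"
      using L(1,2) \<open>1 < x\<close> K(1,4) \<open>K \<le> N\<close> \<open>0 < X\<close> \<open>0 < c\<close> \<open>c \<le> 1\<close> xX N(2) large_c(2) s
      by (intro log_palette_list_ratio_le) auto
    show "real K * (1 / (1 - \<epsilon>)) * log 2 x \<le> L"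
      using K(2) \<epsilon>(2) \<open>0 < X\<close> by (simp add: X_def field_simps)
    show "(1 - \<epsilon>) * L / log 2 x < real K + 1"
      using K(3) by (simp add: X_def)
  qed (use K(1) \<open>K \<le> N\<close> \<open>0 < c\<close> \<open>c \<le> 1\<close> \<open>1 < x\<close> \<epsilon> in auto)
qed

lemma bounded_chain_mono:
  fixes f :: "nat \<Rightarrow> 'a::order"
  assumes "\<forall>i<s. f i \<le> f (Suc i)" "i \<le> j" "j \<le> s"
  shows "f i \<le> f j"
  using assms(2,3)
proof (induction j rule: dec_induct)
  case (step k)
  then show ?case
    using assms(1) by (metis Suc_leD Suc_le_lessD order_trans)
qed simp

lemma ch_complete_multipartite_ge:
  fixes s :: nat and n :: "nat \<Rightarrow> nat" and \<alpha> x \<epsilon> :: real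
  defines "L \<equiv> log 2 (real (n s))"
  assumes s: "1 \<le> s" and n: "2 \<le> n 0" "\<forall>i<s. n i \<le> n (Suc i)"
    and \<alpha>: "real (n 0) = L powr \<alpha>" "2 * sqrt (L / log 2 L) \<le> \<alpha>"
    and x: "1 \<le> x"
    and root: "real s * x - 1 - (\<Sum>j<s. x powr ((L / log 2 (real (n j)) - 1) / (L / log 2 (real (n j))))) = 0"
    and \<epsilon>: "0 < \<epsilon>" "\<epsilon> \<le> 1 / 2" and large: "sufficiently_large s \<epsilon> L"
  shows "(1 - \<epsilon>) * L / log 2 x \<le> real (ch_complete_multipartite s n)"
proof -
  define a where "a j = log 2 (real (n j)) / L" for j
  have "4 \<le> L"
    using large by (simp add: sufficiently_large_def)
  have n_bounds: "2 \<le> n j" "n j \<le> n s" if "j \<le> s" for j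
    using bounded_chain_mono[OF n(2) le0 that] bounded_chain_mono[OF n(2) that order_refl] n(1)
    by simp_all
  have log_n: "0 < log 2 (real (n j))" "log 2 (real (n j)) \<le> L" if "j \<le> s" for j
    using n_bounds[OF that] by (simp_all add: L_def)
  then have a: "0 < a j" "a j \<le> 1" if "j \<le> s" for j
    using that \<open>4 \<le> L\<close> by (simp_all add: a_def zero_less_divide_iff divide_le_eq_1)
  have root_L: "real s = 1 / x + (\<Sum>j<s. x powr (- log 2 (real (n j)) / L))"
    by (rule root_equation_normal_form[THEN iffD1, OF _ _ _ root]) (use x \<open>4 \<le> L\<close> log_n in auto)
  then have root_a: "real s = 1 / x + (\<Sum>j<s. x powr (- a j))"
    by (simp add: a_def)
  have "L * a 0 = log 2 (L powr \<alpha>)"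
    using \<open>4 \<le> L\<close> \<alpha>(1) by (simp add: a_def)
  then have "2 * sqrt L \<le> L * a 0"
    using two_sqrt_le_log_powr[OF _ \<alpha>(2)] \<open>4 \<le> L\<close> by simp
  moreover have "sqrt L * sqrt L = L"
    using \<open>4 \<le> L\<close> by simp
  ultimately have "sqrt L * 2 \<le> sqrt L * (a 0 * sqrt L)"
    by (metis mult.commute mult.left_commute)
  then have "2 \<le> a 0 * sqrt L"
    by (rule mult_left_le_imp_le) (use \<open>4 \<le> L\<close> in simp)
  have a_unit: "0 \<le> a j \<and> a j \<le> 1" if "j < s" for j
    using a[of j] that by simp
  have x_ge: "1 + 1 / real s \<le> x"
    using root_ge[OF s x _ root_a] a_unit by simp
  have "x * log 2 x \<le> (real s + 1) * sqrt L"
    using root_times_log_le[OF s x _ a(1)[of 0] \<open>2 \<le> a 0 * sqrt L\<close> root_a] a_unit by simp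
  then obtain K N \<theta> g where K: "1 \<le> K" "K \<le> N"
    and params: "1 \<le> \<theta>" "real K * \<theta> * log 2 x \<le> L"
      "0 < g" "g \<le> 1" "g \<le> 1 / x - x powr (- \<theta>)"
      "real (s + 1) * real K / real N \<le> g / 2" "ln (real s * real N) / real K \<le> g / (4 * real s)"
    and K_gt: "(1 - \<epsilon>) * L / log 2 x < real K + 1"
    by (rule admissible_parameters[OF s \<epsilon> large x_ge])
  have "\<And>i. i \<le> s \<Longrightarrow> 1 \<le> n i" "0 < log 2 (real (n s))"
    using n_bounds(1) \<open>4 \<le> L\<close> by (force, simp add: L_def)
  then have "K < ch_complete_multipartite s n"
    by (rule ch_complete_multipartite_gt_of_parameters[OF s K _ _ x root_L[unfolded L_def] params[unfolded L_def]])
  then have "real (K + 1) \<le> real (ch_complete_multipartite s n)"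
    by (intro of_nat_mono) simp
  then show ?thesis
    using K_gt by simp
qed

section \<open>Asymptotics\<close>

lemma sqrt_mult_one_plus_ln_le:
  fixes C L :: real
  assumes "0 < C" "max 1 ((6 * C) ^ 4) \<le> L"
  shows "C * sqrt L * (1 + ln (L + 1)) \<le> L"
proof -
  define t where "t = sqrt (sqrt L)"
  have "1 \<le> L"
    using assms(2) by simp
  then have "1 \<le> t" and t2: "t\<^sup>2 = sqrt L"
    by (simp_all add: t_def)
  have "t ^ 4 = (t\<^sup>2)\<^sup>2"
    by (simp flip: power_mult)
  then have t4: "t ^ 4 = L"
    using t2 \<open>1 \<le> L\<close> by simp
  have "(6 * C) ^ 4 \<le> t ^ 4"
    using assms(2) t4 by simp
  then have "6 * C \<le> t"
    using assms(1) \<open>1 \<le> t\<close> power_mono_iff[of "6 * C" t 4] by simp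
  have "ln (L + 1) \<le> ln (2 * L)"
    using \<open>1 \<le> L\<close> by simp
  also have "\<dots> = ln 2 + ln (t ^ 4)"
    using \<open>1 \<le> L\<close> by (simp add: ln_mult t4)
  also have "\<dots> \<le> 1 + 4 * t"
    using ln_2_less_1 ln_bound[of t] \<open>1 \<le> t\<close> by (simp add: ln_realpow)
  finally have "C * t\<^sup>2 * (1 + ln (L + 1)) \<le> C * t\<^sup>2 * (6 * t)"
    using assms(1) \<open>1 \<le> t\<close> by (intro mult_left_mono) auto
  also have "\<dots> = (6 * C) * t ^ 3"
    by (simp add: power2_eq_square power3_eq_cube mult_ac)
  also have "\<dots> \<le> t * t ^ 3"
    using \<open>6 * C \<le> t\<close> \<open>1 \<le> t\<close> by (intro mult_right_mono) auto
  also have "\<dots> = L"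
    using t4 by (simp add: eval_nat_numeral)
  finally show ?thesis
    by (simp add: t2)
qed

lemma filterlim_log_at_top:
  assumes "1 < b"
  shows "filterlim (log b) at_top at_top"
  unfolding filterlim_at_top
proof
  fix Z :: real
  show "\<forall>\<^sub>F x in at_top. Z \<le> log b x"
    using eventually_ge_at_top[of "b powr Z"]
  proof eventually_elim
    case (elim x)
    moreover have "0 < b powr Z"
      using assms by simp
    ultimately have "0 < x"
      by linarith
    then show ?case
      using elim assms by (simp add: le_log_iff)
  qed
qed

lemma eventually_sqrt_ln_le:
  fixes C :: real
  assumes "0 < C"
  shows "\<forall>\<^sub>F L in at_top. C * sqrt L \<le> L \<and> C * (sqrt L * ln (L + 1)) \<le> L"
  using eventually_ge_at_top[of "max 1 ((6 * C) ^ 4)"]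
proof eventually_elim
  case (elim L)
  have "0 \<le> C * sqrt L" "0 \<le> C * (sqrt L * ln (L + 1))"
    using assms elim by simp_all
  moreover have "C * sqrt L + C * (sqrt L * ln (L + 1)) \<le> L"
    using sqrt_mult_one_plus_ln_le[OF assms elim] by (simp add: distrib_left mult.assoc)
  ultimately show ?case
    by linarith
qed

lemma eventually_sufficiently_large:
  assumes "1 \<le> s" "0 < \<epsilon>"
  shows "\<forall>\<^sub>F L in at_top. sufficiently_large s \<epsilon> L"
proof -
  define d where "d = log 2 (1 + 1 / real s)"
  define c where "c = 1 - (1 + 1 / real s) powr (- \<epsilon>)"
  have "0 < d" "0 < c"
    using sufficiently_large_constants_pos[OF assms] by (simp_all add: d_def c_def)
  have sqrt_small: "\<forall>\<^sub>F L in at_top. C * sqrt L \<le> L" if "0 < C" for C :: real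
    using eventually_sqrt_ln_le[OF that] by (rule eventually_mono) simp
  have "\<forall>\<^sub>F L in at_top. 2 * (real s + 1)\<^sup>2 * sqrt L \<le> c * d\<^sup>2 * L"
    using sqrt_small[of "2 * (real s + 1)\<^sup>2 / (c * d\<^sup>2)"] \<open>0 < c\<close> \<open>0 < d\<close>
    by (simp add: field_simps)
  moreover have "\<forall>\<^sub>F L in at_top.
      24 * real s * (real s + 1) * sqrt L * ln (L + 1) + 2 * (real s + 1) * sqrt L \<le> c * L"
  proof -
    have "0 < 48 * real s * (real s + 1) / c"
      using assms(1) \<open>0 < c\<close> by simp
    from eventually_sqrt_ln_le[OF this]
    have "\<forall>\<^sub>F L in at_top. 48 * real s * (real s + 1) * (sqrt L * ln (L + 1)) \<le> c * L"
      by eventually_elim (use \<open>0 < c\<close> in \<open>simp add: field_simps\<close>)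
    moreover have "\<forall>\<^sub>F L in at_top. 4 * (real s + 1) * sqrt L \<le> c * L"
      using sqrt_small[of "4 * (real s + 1) / c"] \<open>0 < c\<close> by (simp add: field_simps)
    ultimately show ?thesis
      by eventually_elim linarith
  qed
  moreover have "\<forall>\<^sub>F L in at_top. 2 * (real s + 1) * sqrt L \<le> L"
    by (rule sqrt_small) simp
  moreover have "\<forall>\<^sub>F L::real in at_top. 4 \<le> L \<and> real s \<le> L + 1 \<and> 1 \<le> d * L"
    using eventually_ge_at_top[of "max 4 (max (real s) (1 / d))"]
    by eventually_elim (use \<open>0 < d\<close> in \<open>simp add: field_simps\<close>)
  ultimately show ?thesis
    unfolding sufficiently_large_def d_def[symmetric] c_def[symmetric]
    by eventually_elim blast
qed

theorem theorem6:
  fixes s :: nat and n :: "nat \<Rightarrow> nat \<Rightarrow> nat" and \<alpha> x0 :: "nat \<Rightarrow> real"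
  assumes "s \<ge> 1"
    and "\<forall>m. 2 \<le> n m 0"
    and "\<forall>m. \<forall>i<s. n m i \<le> n m (Suc i)"
    and "filterlim (\<lambda>m. n m s) at_top sequentially"
    and "\<forall>m. real (n m 0) = log 2 (real (n m s)) powr \<alpha> m"
    and "\<forall>m. \<alpha> m \<ge> 2 * sqrt (log 2 (real (n m s)) / log 2 (log 2 (real (n m s))))"
    and "\<forall>m. x0 m \<ge> 1 \<and>
           real s * x0 m - 1
           - (\<Sum>j<s. x0 m powr
                ((log 2 (real (n m s)) / log 2 (real (n m j)) - 1)
                 / (log 2 (real (n m s)) / log 2 (real (n m j))))) = 0"
  shows "\<forall>\<epsilon>>0. eventually (\<lambda>m. real (ch_complete_multipartite s (n m))
            \<ge> (1 - \<epsilon>) * log 2 (real (n m s)) / log 2 (x0 m)) sequentially"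
proof (intro allI impI)
  fix \<epsilon> :: real
  assume "0 < \<epsilon>"
  define \<delta> where "\<delta> = min \<epsilon> (1 / 2)"
  have \<delta>: "0 < \<delta>" "\<delta> \<le> 1 / 2" "\<delta> \<le> \<epsilon>"
    using \<open>0 < \<epsilon>\<close> by (auto simp: \<delta>_def)
  have "filterlim (\<lambda>m. log 2 (real (n m s))) at_top sequentially"
    using filterlim_log_at_top[of 2] filterlim_compose[OF filterlim_real_sequentially assms(4)]
    by (auto intro: filterlim_compose)
  then have "\<forall>\<^sub>F m in sequentially. sufficiently_large s \<delta> (log 2 (real (n m s)))"
    by (rule eventually_compose_filterlim[OF eventually_sufficiently_large[OF assms(1) \<delta>(1)]])
  then show "\<forall>\<^sub>F m in sequentially.
      (1 - \<epsilon>) * log 2 (real (n m s)) / log 2 (x0 m) \<le> real (ch_complete_multipartite s (n m))"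
  proof eventually_elim
    case (elim m)
    have "(1 - \<delta>) * log 2 (real (n m s)) / log 2 (x0 m) \<le> real (ch_complete_multipartite s (n m))"
      using assms(7) by (intro ch_complete_multipartite_ge[OF assms(1) spec[OF assms(2)] spec[OF assms(3)]
          spec[OF assms(5)] spec[OF assms(6)] _ _ \<delta>(1,2) elim]) auto
    moreover have "(1 - \<epsilon>) * log 2 (real (n m s)) / log 2 (x0 m)
        \<le> (1 - \<delta>) * log 2 (real (n m s)) / log 2 (x0 m)"
      using \<delta>(3) spec[OF assms(7), of m] elim
      by (intro divide_right_mono mult_right_mono) (auto simp: sufficiently_large_def)
    ultimately show ?case
      by linarith
  qed
qed

end
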